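(* For all integers $1\le t\le n$, both the $t$-path ideal $I_t(L_n)$ and its Alexander dual $I_t(L_n)^{\vee}$ are normally torsion-free ideals of $S=K[x_1,\ldots,x_n]$.
   Context: $K$ is a field, $S=K[x_1,\ldots,x_n]$. $L_n$ is the line graph on vertices $x_1,\ldots,x_n$ with edges $\{x_j,x_{j+1}\}$, $j=1,\ldots,n-1$. The $t$-path ideal is $I_t(L_n)=(u_1,\ldots,u_{n-t+1})$ with $u_i=x_ix_{i+1}\cdots x_{i+t-1}$. For a squarefree monomial ideal $I$ whose minimal generators are $x_{G_1},\ldots,x_{G_m}$ (with $x_G=\prod_{i\in G}x_i$), the Alexander dual $I^\vee$ is the ideal generated by all $x_C$ with $C\subseteq[n]$ satisfying $C\cap G_j\ne\emptyset$ for all $j$ (vertex covers). An ideal $I$ is normally torsion-free if $\mathrm{Ass}(S/I^s)=\mathrm{Ass}(S/I)$ for all $s\ge1$. *)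

theory Defs
  imports "HOL-Library.Poly_Mapping"
begin

type_synonym 'k mpoly = "(nat \<Rightarrow>\<^sub>0 nat) \<Rightarrow>\<^sub>0 'k"

definition polyring :: "nat \<Rightarrow> 'k::field mpoly set" where
  "polyring n = {p. \<forall>m \<in> Poly_Mapping.keys p. Poly_Mapping.keys m \<subseteq> {1..n}}"

definition var :: "nat \<Rightarrow> 'k::field mpoly" where
  "var i = Poly_Mapping.single (Poly_Mapping.single i 1) 1"

definition xmon :: "nat set \<Rightarrow> 'k::field mpoly" where
  "xmon G = (\<Prod>i\<in>G. var i)"

definition gen_ideal :: "nat \<Rightarrow> 'k::field mpoly set \<Rightarrow> 'k mpoly set" where
  "gen_ideal n A = {p. \<exists>F c. finite F \<and> F \<subseteq> A \<and> (\<forall>a\<in>F. c a \<in> polyring n)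
                           \<and> p = (\<Sum>a\<in>F. c a * a)}"

definition is_ideal :: "nat \<Rightarrow> 'k::field mpoly set \<Rightarrow> bool" where
  "is_ideal n I \<longleftrightarrow> I \<subseteq> polyring n \<and> 0 \<in> I \<and> (\<forall>a\<in>I. \<forall>b\<in>I. a + b \<in> I)
                    \<and> (\<forall>r\<in>polyring n. \<forall>a\<in>I. r * a \<in> I)"

definition is_prime_ideal :: "nat \<Rightarrow> 'k::field mpoly set \<Rightarrow> bool" where
  "is_prime_ideal n P \<longleftrightarrow> is_ideal n P \<and> P \<noteq> polyring n
     \<and> (\<forall>a\<in>polyring n. \<forall>b\<in>polyring n. a * b \<in> P \<longrightarrow> a \<in> P \<or> b \<in> P)"

definition ideal_pow :: "nat \<Rightarrow> 'k::field mpoly set \<Rightarrow> nat \<Rightarrow> 'k mpoly set" where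
  "ideal_pow n I s = gen_ideal n {\<Prod>i<s. f i | f. \<forall>i<s. f i \<in> I}"

definition Ass :: "nat \<Rightarrow> 'k::field mpoly set \<Rightarrow> 'k mpoly set set" where
  "Ass n I = {P. is_prime_ideal n P \<and> (\<exists>f\<in>polyring n. P = {g \<in> polyring n. g * f \<in> I})}"

definition normally_torsion_free :: "nat \<Rightarrow> 'k::field mpoly set \<Rightarrow> bool" where
  "normally_torsion_free n I \<longleftrightarrow> (\<forall>s\<ge>1. Ass n (ideal_pow n I s) = Ass n I)"

definition path_ideal :: "nat \<Rightarrow> nat \<Rightarrow> 'k::field mpoly set" where
  "path_ideal n t = gen_ideal n {xmon {i..i+t-1} | i. 1 \<le> i \<and> i \<le> n - t + 1}"

text \<open>Alexander dual of the squarefree monomial ideal whose minimal generators are x_G, G in Gs: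
generated by all x_C, C \<subseteq> [n], C meeting every G.\<close>
definition alexander_dual :: "nat \<Rightarrow> nat set set \<Rightarrow> 'k::field mpoly set" where
  "alexander_dual n Gs = gen_ideal n {xmon C | C. C \<subseteq> {1..n} \<and> (\<forall>G\<in>Gs. C \<inter> G \<noteq> {})}"

definition path_sets :: "nat \<Rightarrow> nat \<Rightarrow> nat set set" where
  "path_sets n t = {{i..i+t-1} | i. 1 \<le> i \<and> i \<le> n - t + 1}"

end

theory Submission
  imports Defs
begin

text \<open>Both ideals are squarefree monomial ideals whose minimal primes are generated by variables,
  \<open>P\<^sub>D = (x\<^sub>i : i \<in> D)\<close> for \<open>D\<close> in an antichain \<open>Ds\<close>. Each \<open>P\<^sub>D\<^sup>s\<close> is \<open>P\<^sub>D\<close>-primary, so the associated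
  primes of \<open>\<Inter>\<^sub>D P\<^sub>D\<^sup>s\<close> are exactly the \<open>P\<^sub>D\<close>; hence the ideal is normally torsion-free once all its
  powers equal these symbolic powers. On monomials that equality is a packing property: an exponent
  vector of weight at least \<open>s\<close> on every \<open>D\<close> dominates a sum of \<open>s\<close> generator exponents.

  For the path ideal the generators are the windows \<open>{i..i+t-1}\<close> and \<open>Ds\<close> are the minimal window
  covers; windows are packed greedily, always taking the first window on which the weight is positive.
  For the Alexander dual the roles are exchanged and \<open>s\<close> covers are cut out of the prefix sums of the
  weight, one for each residue class modulo \<open>s\<close>.\<close>

abbreviation lookup where "lookup \<equiv> Poly_Mapping.lookup"
abbreviation keys where "keys \<equiv> Poly_Mapping.keys"
abbreviation single where "single \<equiv> Poly_Mapping.single"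

type_synonym monom = "nat \<Rightarrow>\<^sub>0 nat"

definition monom_poly :: "monom \<Rightarrow> 'k::field mpoly" where
  "monom_poly a = single a 1"

lemma keys_monom_poly [simp]: "keys (monom_poly a :: 'k::field mpoly) = {a}"
  by (simp add: monom_poly_def)

lemma prod_monom_poly: "(\<Prod>i\<in>A. (monom_poly (f i) :: 'k::field mpoly)) = monom_poly (\<Sum>i\<in>A. f i)"
  by (induction A rule: infinite_finite_induct) (auto simp: monom_poly_def mult_single)

lemma keys_monom_add: "keys ((a :: monom) + b) = keys a \<union> keys b"
  by (auto simp: in_keys_iff lookup_add)

lemma keys_monom_sum: "keys (\<Sum>i\<in>A. (f i :: monom)) \<subseteq> (\<Union>i\<in>A. keys (f i))"
  by (induction A rule: infinite_finite_induct) (auto simp: keys_monom_add)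

lemma lookup_single_nat: "lookup (single i (s::nat)) j = (if i = j then s else 0)"
  by (simp add: lookup_single when_def)

lemma var_power: "(var i :: 'k::field mpoly) ^ s = monom_poly (single i s)"
  by (induction s) (auto simp: var_def monom_poly_def mult_single single_add[symmetric] add.commute)

lemma poly_eq_sum_single: "p = (\<Sum>b\<in>keys p. single b (lookup p b))"
proof (rule poly_mapping_eqI)
  fix k
  have "lookup (\<Sum>b\<in>keys p. single b (lookup p b)) k = (\<Sum>b\<in>keys p. (lookup p b when b = k))"
    by (simp add: lookup_sum lookup_single)
  also have "\<dots> = lookup p k"
    by (cases "k \<in> keys p") (simp_all add: when_def in_keys_iff)
  finally show "lookup p k = lookup (\<Sum>b\<in>keys p. single b (lookup p b)) k" by simp
qed

lemma polyring_0 [simp]: "0 \<in> polyring n"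
  by (simp add: polyring_def)

lemma polyring_1 [simp]: "(1::'k::field mpoly) \<in> polyring n"
  by (simp add: polyring_def)

lemma polyring_add [intro]: "p \<in> polyring n \<Longrightarrow> q \<in> polyring n \<Longrightarrow> p + q \<in> polyring n"
  using keys_add[of p q] by (auto simp: polyring_def)

lemma polyring_mult [intro]: "p \<in> polyring n \<Longrightarrow> q \<in> polyring n \<Longrightarrow> p * q \<in> polyring n"
  using keys_mult[of p q] by (fastforce simp: polyring_def keys_monom_add)

lemma polyring_power [intro]: "p \<in> polyring n \<Longrightarrow> p ^ k \<in> polyring n"
  by (induction k) auto

lemma polyring_sum [intro]: "(\<And>x. x \<in> A \<Longrightarrow> f x \<in> polyring n) \<Longrightarrow> sum f A \<in> polyring n"
  by (induction A rule: infinite_finite_induct) auto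

lemma polyring_prod [intro]: "(\<And>x. x \<in> A \<Longrightarrow> f x \<in> polyring n) \<Longrightarrow> prod f A \<in> polyring n"
  by (induction A rule: infinite_finite_induct) auto

lemma polyring_single [intro]: "keys a \<subseteq> {1..n} \<Longrightarrow> single a c \<in> polyring n"
  by (simp add: polyring_def)

lemma polyring_monom_poly [intro]: "keys a \<subseteq> {1..n} \<Longrightarrow> monom_poly a \<in> polyring n"
  by (simp add: polyring_def)

lemma ideal_sum:
  assumes "is_ideal n I" "\<And>x. x \<in> A \<Longrightarrow> f x \<in> I"
  shows "sum f A \<in> I"
  using assms(2) by (induction A rule: infinite_finite_induct) (use assms(1) in \<open>auto simp: is_ideal_def\<close>)

lemma ideal_mult: "is_ideal n I \<Longrightarrow> r \<in> polyring n \<Longrightarrow> a \<in> I \<Longrightarrow> r * a \<in> I"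
  by (auto simp: is_ideal_def)

lemma ideal_eq_polyring_if_one: "is_ideal n P \<Longrightarrow> 1 \<in> P \<Longrightarrow> P = polyring n"
  using ideal_mult[of n P _ 1] by (auto simp: is_ideal_def)

lemma gen_ideal_subset: "is_ideal n I \<Longrightarrow> A \<subseteq> I \<Longrightarrow> gen_ideal n A \<subseteq> I"
  unfolding gen_ideal_def by (auto intro!: ideal_sum ideal_mult)

lemma gen_ideal_mono: "A \<subseteq> B \<Longrightarrow> gen_ideal n A \<subseteq> gen_ideal n B"
  by (auto simp: gen_ideal_def)

lemma gen_ideal_base: "a \<in> A \<Longrightarrow> a \<in> gen_ideal n A"
  unfolding gen_ideal_def by (rule CollectI, rule exI[of _ "{a}"], rule exI[of _ "\<lambda>_. 1"]) auto

lemma gen_ideal_add: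
  assumes "a \<in> gen_ideal n A" "b \<in> gen_ideal n A"
  shows "a + b \<in> gen_ideal n A"
proof -
  obtain F1 c1 F2 c2
    where F1: "finite F1" "F1 \<subseteq> A" "\<forall>x\<in>F1. c1 x \<in> polyring n" "a = (\<Sum>x\<in>F1. c1 x * x)"
      and F2: "finite F2" "F2 \<subseteq> A" "\<forall>x\<in>F2. c2 x \<in> polyring n" "b = (\<Sum>x\<in>F2. c2 x * x)"
    using assms by (auto simp: gen_ideal_def)
  define c where "c x = (if x \<in> F1 then c1 x else 0) + (if x \<in> F2 then c2 x else 0)" for x
  have "(\<Sum>x\<in>F1 \<union> F2. c x * x)
      = (\<Sum>x\<in>F1 \<union> F2. if x \<in> F1 then c1 x * x else 0) + (\<Sum>x\<in>F1 \<union> F2. if x \<in> F2 then c2 x * x else 0)"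
    unfolding sum.distrib[symmetric] by (rule sum.cong) (auto simp: c_def distrib_right)
  also have "\<dots> = a + b"
    using sum.inter_restrict[of "F1 \<union> F2" "\<lambda>x. c1 x * x" F1]
      sum.inter_restrict[of "F1 \<union> F2" "\<lambda>x. c2 x * x" F2] F1 F2
    by (simp add: Int_absorb1)
  finally have "a + b = (\<Sum>x\<in>F1 \<union> F2. c x * x)" by simp
  moreover have "\<forall>x\<in>F1 \<union> F2. c x \<in> polyring n"
    using F1 F2 by (auto simp: c_def)
  ultimately show ?thesis
    using F1 F2 unfolding gen_ideal_def by (intro CollectI exI[of _ "F1 \<union> F2"] exI[of _ c]) auto
qed

lemma gen_ideal_mult:
  assumes "r \<in> polyring n" "a \<in> gen_ideal n A"
  shows "r * a \<in> gen_ideal n A"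
proof -
  obtain F c where F: "finite F" "F \<subseteq> A" "\<forall>x\<in>F. c x \<in> polyring n" "a = (\<Sum>x\<in>F. c x * x)"
    using assms(2) by (auto simp: gen_ideal_def)
  have "r * a = (\<Sum>x\<in>F. (r * c x) * x)"
    by (simp add: F(4) sum_distrib_left mult.assoc)
  then show ?thesis
    using F assms(1) unfolding gen_ideal_def by (intro CollectI exI[of _ F] exI[of _ "\<lambda>x. r * c x"]) auto
qed

lemma gen_ideal_is_ideal:
  assumes "A \<subseteq> polyring n"
  shows "is_ideal n (gen_ideal n A)"
  unfolding is_ideal_def
proof (intro conjI ballI)
  show "gen_ideal n A \<subseteq> polyring n"
    using assms unfolding gen_ideal_def by (blast intro: polyring_sum polyring_mult)
  show "0 \<in> gen_ideal n A"
    unfolding gen_ideal_def by (rule CollectI, rule exI[of _ "{}"]) auto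
qed (simp_all add: gen_ideal_add gen_ideal_mult)

lemma prime_ideal_power:
  assumes P: "is_prime_ideal n P" and a: "a \<in> polyring n" and as: "a ^ s \<in> P"
  shows "a \<in> P"
  using as
proof (induction s)
  case 0
  then show ?case using P ideal_eq_polyring_if_one by (auto simp: is_prime_ideal_def)
next
  case (Suc s)
  then show ?case using P a by (auto simp: is_prime_ideal_def)
qed

lemma prime_ideal_prod:
  assumes P: "is_prime_ideal n P" and X: "finite X" and g: "\<forall>x\<in>X. g x \<in> polyring n"
    and pr: "prod g X \<in> P"
  shows "\<exists>x\<in>X. g x \<in> P"
  using X g pr
proof (induction X rule: finite_induct)
  case empty
  then show ?case using P ideal_eq_polyring_if_one by (auto simp: is_prime_ideal_def)
next
  case (insert x F)
  have "prod g F \<in> polyring n" using insert by auto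
  then show ?case using insert P by (auto simp: is_prime_ideal_def)
qed

section \<open>Monomial ideals\<close>

definition monom_dvd :: "monom \<Rightarrow> monom \<Rightarrow> bool" where
  "monom_dvd a b \<longleftrightarrow> (\<forall>i. lookup a i \<le> lookup b i)"

definition monomial_ideal :: "nat \<Rightarrow> monom set \<Rightarrow> 'k::field mpoly set" where
  "monomial_ideal n M = {p \<in> polyring n. \<forall>b\<in>keys p. \<exists>a\<in>M. monom_dvd a b}"

text \<open>The exponents of the generators of the \<open>s\<close>-th power of \<open>monomial_ideal n M\<close>.\<close>
definition monom_sums :: "monom set \<Rightarrow> nat \<Rightarrow> monom set" where
  "monom_sums M s = {\<Sum>i<s. a i | a. \<forall>i<s. a i \<in> M}"

lemma monomial_ideal_is_ideal: "is_ideal n (monomial_ideal n M)"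
  unfolding is_ideal_def
proof (intro conjI ballI)
  fix p q :: "'k::field mpoly"
  assume "p \<in> monomial_ideal n M" "q \<in> monomial_ideal n M"
  then show "p + q \<in> monomial_ideal n M"
    using keys_add[of p q] by (auto simp: monomial_ideal_def)
next
  fix r p :: "'k::field mpoly"
  assume r: "r \<in> polyring n" and p: "p \<in> monomial_ideal n M"
  have "\<exists>x\<in>M. monom_dvd x b" if "b \<in> keys (r * p)" for b
  proof -
    obtain u v where "v \<in> keys p" "b = u + v"
      using \<open>b \<in> keys (r * p)\<close> keys_mult[of r p] by blast
    moreover obtain x where "x \<in> M" "monom_dvd x v"
      using p \<open>v \<in> keys p\<close> by (auto simp: monomial_ideal_def)
    ultimately show ?thesis
      by (auto simp: monom_dvd_def lookup_add intro: trans_le_add2)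
  qed
  then show "r * p \<in> monomial_ideal n M"
    using r p by (auto simp: monomial_ideal_def)
qed (auto simp: monomial_ideal_def)

lemma monomial_ideal_mono: "M1 \<subseteq> M2 \<Longrightarrow> monomial_ideal n M1 \<subseteq> monomial_ideal n M2"
  unfolding monomial_ideal_def by blast

lemma monom_poly_in_monomial_ideal:
  "keys a \<subseteq> {1..n} \<Longrightarrow> a \<in> M \<Longrightarrow> monom_poly a \<in> monomial_ideal n M"
  by (auto simp: monomial_ideal_def monom_dvd_def polyring_def)

lemma gen_ideal_monom_poly:
  assumes M: "\<forall>a\<in>M. keys a \<subseteq> {1..n}"
  shows "gen_ideal n (monom_poly ` M :: 'k::field mpoly set) = monomial_ideal n M"
proof
  show "gen_ideal n (monom_poly ` M :: 'k mpoly set) \<subseteq> monomial_ideal n M"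
    using M monom_poly_in_monomial_ideal by (intro gen_ideal_subset monomial_ideal_is_ideal) blast
next
  let ?I = "gen_ideal n (monom_poly ` M :: 'k mpoly set)"
  have I: "is_ideal n ?I"
    using M polyring_monom_poly by (intro gen_ideal_is_ideal) blast
  show "monomial_ideal n M \<subseteq> ?I"
  proof
    fix p :: "'k mpoly"
    assume p: "p \<in> monomial_ideal n M"
    have "single b (lookup p b) \<in> ?I" if b: "b \<in> keys p" for b
    proof -
      obtain a where a: "a \<in> M" "monom_dvd a b"
        using p b by (auto simp: monomial_ideal_def)
      have "(b - a) + a = b"
        by (rule poly_mapping_eqI) (use a(2) in \<open>simp add: lookup_add lookup_minus monom_dvd_def\<close>)
      then have "single b (lookup p b) = single (b - a) (lookup p b) * monom_poly a"
        by (simp add: monom_poly_def mult_single)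
      moreover have "single (b - a) (lookup p b) \<in> polyring n"
        using keys_diff[of b a] p b a M by (intro polyring_single) (auto simp: monomial_ideal_def polyring_def)
      moreover have "monom_poly a \<in> ?I"
        using a by (intro gen_ideal_base) auto
      ultimately show ?thesis
        using ideal_mult[OF I] by metis
    qed
    then have "(\<Sum>b\<in>keys p. single b (lookup p b)) \<in> ?I"
      by (intro ideal_sum[OF I])
    then show "p \<in> ?I"
      using poly_eq_sum_single[of p] by simp
  qed
qed

lemma mult_in_monomial_ideal:
  assumes "p \<in> monomial_ideal n M1" "q \<in> monomial_ideal n M2"
  shows "p * q \<in> monomial_ideal n {a + b | a b. a \<in> M1 \<and> b \<in> M2}"
proof -
  have "\<exists>x\<in>{a + b | a b. a \<in> M1 \<and> b \<in> M2}. monom_dvd x c" if c: "c \<in> keys (p * q)" for c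
  proof -
    obtain u v where uv: "u \<in> keys p" "v \<in> keys q" "c = u + v"
      using c keys_mult[of p q] by blast
    then obtain x y where "x \<in> M1" "monom_dvd x u" "y \<in> M2" "monom_dvd y v"
      using assms unfolding monomial_ideal_def by blast
    then have "x + y \<in> {a + b | a b. a \<in> M1 \<and> b \<in> M2}" "monom_dvd (x + y) c"
      using uv by (auto simp: monom_dvd_def lookup_add intro: add_mono)
    then show ?thesis ..
  qed
  then show ?thesis
    using assms by (auto simp: monomial_ideal_def)
qed

lemma prod_in_monomial_ideal:
  "\<forall>i<s. f i \<in> monomial_ideal n M \<Longrightarrow> (\<Prod>i<s. f i) \<in> monomial_ideal n (monom_sums M s)"
proof (induction s)
  case 0
  then show ?case by (simp add: monomial_ideal_def monom_dvd_def monom_sums_def)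
next
  case (Suc s)
  have "(\<Prod>i<Suc s. f i) \<in> monomial_ideal n {a + b | a b. a \<in> monom_sums M s \<and> b \<in> M}"
    using Suc by (simp add: mult_in_monomial_ideal)
  moreover have "{a + b | a b. a \<in> monom_sums M s \<and> b \<in> M} \<subseteq> monom_sums M (Suc s)"
  proof
    fix x assume "x \<in> {a + b | a b. a \<in> monom_sums M s \<and> b \<in> M}"
    then obtain a b where x: "x = (\<Sum>i<s. a i) + b" "\<forall>i<s. a i \<in> M" "b \<in> M"
      by (auto simp: monom_sums_def)
    then have "x = (\<Sum>i<Suc s. (a(s := b)) i)" "\<forall>i<Suc s. (a(s := b)) i \<in> M"
      by (auto simp: less_Suc_eq)
    then show "x \<in> monom_sums M (Suc s)"
      unfolding monom_sums_def by blast
  qed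
  ultimately show ?case
    using monomial_ideal_mono by blast
qed

lemma monom_sums_1 [simp]: "monom_sums M 1 = M"
proof -
  have "x \<in> monom_sums M 1" if "x \<in> M" for x
    using that unfolding monom_sums_def by (intro CollectI exI[of _ "\<lambda>_. x"]) simp
  then show ?thesis
    by (auto simp: monom_sums_def)
qed

lemma ideal_pow_monomial_ideal:
  assumes M: "\<forall>a\<in>M. keys a \<subseteq> {1..n}"
  shows "ideal_pow n (monomial_ideal n M :: 'k::field mpoly set) s = monomial_ideal n (monom_sums M s)"
proof
  show "ideal_pow n (monomial_ideal n M :: 'k mpoly set) s \<subseteq> monomial_ideal n (monom_sums M s)"
    unfolding ideal_pow_def
    by (rule gen_ideal_subset[OF monomial_ideal_is_ideal]) (auto intro: prod_in_monomial_ideal)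
next
  have sums: "\<forall>a\<in>monom_sums M s. keys a \<subseteq> {1..n}"
    using M keys_monom_sum unfolding monom_sums_def by blast
  have "monom_poly ` monom_sums M s
      \<subseteq> {\<Prod>i<s. f i | f. \<forall>i<s. f i \<in> (monomial_ideal n M :: 'k mpoly set)}"
  proof
    fix x :: "'k mpoly"
    assume "x \<in> monom_poly ` monom_sums M s"
    then obtain a where a: "x = monom_poly (\<Sum>i<s. a i)" "\<forall>i<s. a i \<in> M"
      by (auto simp: monom_sums_def)
    then have "x = (\<Prod>i<s. monom_poly (a i))" "\<forall>i<s. (monom_poly (a i) :: 'k mpoly) \<in> monomial_ideal n M"
      using M monom_poly_in_monomial_ideal by (simp add: prod_monom_poly, blast)
    then show "x \<in> {\<Prod>i<s. f i | f. \<forall>i<s. f i \<in> monomial_ideal n M}"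
      by blast
  qed
  then show "monomial_ideal n (monom_sums M s) \<subseteq> ideal_pow n (monomial_ideal n M :: 'k mpoly set) s"
    unfolding ideal_pow_def gen_ideal_monom_poly[OF sums, symmetric] by (rule gen_ideal_mono)
qed

section \<open>Powers of the primes generated by variables\<close>

definition partial_degree :: "nat set \<Rightarrow> monom \<Rightarrow> nat" where
  "partial_degree D b = (\<Sum>i\<in>D. lookup b i)"

text \<open>For finite \<open>D\<close>, \<open>deg_ge D k\<close> is the \<open>k\<close>-th power of the ideal generated by the variables
  \<open>x\<^sub>i\<close>, \<open>i \<in> D\<close>, in the ambient polynomial ring.\<close>
definition deg_ge :: "nat set \<Rightarrow> nat \<Rightarrow> 'k::field mpoly set" where
  "deg_ge D k = {p. \<forall>b\<in>keys p. k \<le> partial_degree D b}"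

definition low_part :: "nat set \<Rightarrow> nat \<Rightarrow> 'k::field mpoly \<Rightarrow> 'k mpoly" where
  "low_part D k p = Abs_poly_mapping (\<lambda>b. lookup p b when partial_degree D b < k)"

definition var_ideal :: "nat \<Rightarrow> nat set \<Rightarrow> 'k::field mpoly set" where
  "var_ideal n D = deg_ge D 1 \<inter> polyring n"

text \<open>For a squarefree monomial ideal whose minimal primes are the \<open>var_ideal n D\<close>, \<open>D \<in> Ds\<close>,
  this is its \<open>s\<close>-th symbolic power.\<close>
definition symbolic_power :: "nat \<Rightarrow> nat set set \<Rightarrow> nat \<Rightarrow> 'k::field mpoly set" where
  "symbolic_power n Ds s = {p \<in> polyring n. \<forall>D\<in>Ds. p \<in> deg_ge D s}"

lemma partial_degree_0 [simp]: "partial_degree D 0 = 0"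
  by (simp add: partial_degree_def)

lemma partial_degree_add [simp]: "partial_degree D (a + b) = partial_degree D a + partial_degree D b"
  by (simp add: partial_degree_def lookup_add sum.distrib)

lemma partial_degree_sum: "partial_degree D (\<Sum>i\<in>A. f i) = (\<Sum>i\<in>A. partial_degree D (f i))"
  by (induction A rule: infinite_finite_induct) auto

lemma partial_degree_mono: "finite D \<Longrightarrow> monom_dvd a b \<Longrightarrow> partial_degree D a \<le> partial_degree D b"
  unfolding partial_degree_def monom_dvd_def by (rule sum_mono) auto

lemma partial_degree_single: "finite D \<Longrightarrow> partial_degree D (single i s) = (if i \<in> D then s else 0)"
  by (simp add: partial_degree_def lookup_single_nat)

lemma lookup_low_part: "lookup (low_part D k p) b = (lookup p b when partial_degree D b < k)"
proof -
  have "finite {b. (lookup p b when partial_degree D b < k) \<noteq> 0}"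
    by (rule finite_subset[of _ "keys p"]) (auto simp: in_keys_iff)
  then show ?thesis
    by (simp add: low_part_def)
qed

lemma keys_low_part: "keys (low_part D k p) = {b \<in> keys p. partial_degree D b < k}"
  by (auto simp: in_keys_iff lookup_low_part)

lemma deg_ge_0 [simp]: "p \<in> deg_ge D 0"
  by (simp add: deg_ge_def)

lemma zero_in_deg_ge [simp]: "0 \<in> deg_ge D k"
  by (simp add: deg_ge_def)

lemma deg_ge_antimono: "k \<le> l \<Longrightarrow> deg_ge D l \<subseteq> deg_ge D k"
  by (auto simp: deg_ge_def)

lemma deg_ge_add: "p \<in> deg_ge D k \<Longrightarrow> q \<in> deg_ge D k \<Longrightarrow> p + q \<in> deg_ge D k"
  using keys_add[of p q] by (auto simp: deg_ge_def)

lemma deg_ge_diff: "p \<in> deg_ge D k \<Longrightarrow> q \<in> deg_ge D k \<Longrightarrow> p - q \<in> deg_ge D k"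
  using keys_diff[of p q] by (auto simp: deg_ge_def)

lemma deg_ge_mult: "p \<in> deg_ge D j \<Longrightarrow> q \<in> deg_ge D k \<Longrightarrow> p * q \<in> deg_ge D (j + k)"
  using keys_mult[of p q] by (fastforce simp: deg_ge_def intro: add_mono)

lemma deg_ge_mult_left: "q \<in> deg_ge D k \<Longrightarrow> p * q \<in> deg_ge D k"
  using deg_ge_mult[of p D 0 q k] by simp

lemma deg_ge_mult_right: "p \<in> deg_ge D k \<Longrightarrow> p * q \<in> deg_ge D k"
  using deg_ge_mult_left[of p D k q] by (simp add: mult.commute)

lemma diff_low_part_deg_ge: "p - low_part D k p \<in> deg_ge D k"
  by (auto simp: deg_ge_def in_keys_iff lookup_minus lookup_low_part when_def split: if_splits)

lemma low_part_eq_0_iff: "low_part D k p = 0 \<longleftrightarrow> p \<in> deg_ge D k"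
proof
  assume "low_part D k p = 0"
  then show "p \<in> deg_ge D k"
    using diff_low_part_deg_ge[of p D k] by simp
next
  assume "p \<in> deg_ge D k"
  then have "keys (low_part D k p) = {}"
    by (auto simp: keys_low_part deg_ge_def)
  then show "low_part D k p = 0" by simp
qed

lemma deg_ge_exact_level: "f \<notin> deg_ge D s \<Longrightarrow> \<exists>m<s. f \<in> deg_ge D m \<and> f \<notin> deg_ge D (Suc m)"
proof (induction s)
  case (Suc s)
  then show ?case
    by (cases "f \<in> deg_ge D s") (auto intro: less_SucI)
qed simp

text \<open>\<open>deg_ge D s\<close> is primary to \<open>deg_ge D 1\<close>. Split off the part \<open>g0\<close> of \<open>g\<close> of \<open>D\<close>-degree \<open>0\<close> and the
  part \<open>f0\<close> of \<open>f\<close> of least \<open>D\<close>-degree \<open>m < s\<close>: then \<open>g0 * f0\<close> is nonzero of \<open>D\<close>-degree \<open>m\<close>, but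
  congruent to \<open>g * f\<close> modulo \<open>deg_ge D (Suc m)\<close>.\<close>
lemma deg_ge_primary:
  assumes g: "g \<notin> deg_ge D 1" and f: "f \<notin> deg_ge D s"
  shows "g * f \<notin> deg_ge D s"
proof
  assume gf: "g * f \<in> deg_ge D s"
  obtain m where "m < s" and f_m: "f \<in> deg_ge D m" "f \<notin> deg_ge D (Suc m)"
    using deg_ge_exact_level[OF f] by blast
  define g0 where "g0 = low_part D 1 g"
  define f0 where "f0 = low_part D (Suc m) f"
  have "g0 * f0 \<noteq> 0"
    using g f_m(2) by (simp add: g0_def f0_def low_part_eq_0_iff)
  then obtain c where c: "c \<in> keys (g0 * f0)"
    by (meson ex_in_conv keys_eq_empty)
  have "partial_degree D c < Suc m"
    using c keys_mult[of g0 f0] by (auto simp: g0_def f0_def keys_low_part)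
  moreover have "g0 * f0 \<in> deg_ge D (Suc m)"
  proof -
    have "g0 * f0 = g * f - (g - g0) * f - g0 * (f - f0)"
      by (simp add: algebra_simps)
    moreover have "g * f \<in> deg_ge D (Suc m)"
      using gf deg_ge_antimono[of "Suc m" s D] \<open>m < s\<close> by auto
    moreover have "(g - g0) * f \<in> deg_ge D (Suc m)"
      using deg_ge_mult[OF diff_low_part_deg_ge f_m(1), of g 1] by (simp add: g0_def)
    moreover have "g0 * (f - f0) \<in> deg_ge D (Suc m)"
      using deg_ge_mult_left[OF diff_low_part_deg_ge] by (simp add: f0_def)
    ultimately show ?thesis
      by (simp add: deg_ge_diff)
  qed
  ultimately show False
    using c by (auto simp: deg_ge_def)
qed

lemma var_ideal_is_prime: "is_prime_ideal n (var_ideal n D :: 'k::field mpoly set)"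
  unfolding is_prime_ideal_def is_ideal_def
proof (intro conjI ballI impI)
  show "var_ideal n D \<subseteq> (polyring n :: 'k mpoly set)" "0 \<in> (var_ideal n D :: 'k mpoly set)"
    by (auto simp: var_ideal_def)
  show "var_ideal n D \<noteq> (polyring n :: 'k mpoly set)"
  proof
    assume "var_ideal n D = (polyring n :: 'k mpoly set)"
    then have "(1 :: 'k mpoly) \<in> var_ideal n D"
      by simp
    then have "(1 :: 'k mpoly) \<in> deg_ge D 1"
      by (simp add: var_ideal_def)
    then show False
      by (simp add: deg_ge_def)
  qed
next
  fix a b :: "'k mpoly"
  assume "a \<in> var_ideal n D" "b \<in> var_ideal n D"
  then show "a + b \<in> var_ideal n D"
    by (simp add: var_ideal_def deg_ge_add polyring_add)
next
  fix r a :: "'k mpoly"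
  assume "r \<in> polyring n" "a \<in> var_ideal n D"
  then show "r * a \<in> var_ideal n D"
    by (simp add: var_ideal_def deg_ge_mult_left polyring_mult)
next
  fix a b :: "'k mpoly"
  assume "a \<in> polyring n" "b \<in> polyring n" "a * b \<in> var_ideal n D"
  then show "a \<in> var_ideal n D \<or> b \<in> var_ideal n D"
    using deg_ge_primary[of a D b 1] by (auto simp: var_ideal_def)
qed

lemma var_ideal_eq_gen_ideal:
  assumes D: "D \<subseteq> {1..n}"
  shows "var_ideal n D = gen_ideal n (var ` D :: 'k::field mpoly set)"
proof -
  let ?E = "{single i 1 | i. i \<in> D}"
  have "finite D"
    using D finite_subset by blast
  have "(\<exists>a\<in>?E. monom_dvd a b) \<longleftrightarrow> 1 \<le> partial_degree D b" for b
  proof -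
    have "1 \<le> partial_degree D b \<longleftrightarrow> (\<exists>i\<in>D. lookup b i \<noteq> 0)"
      using \<open>finite D\<close> by (auto simp: partial_degree_def Suc_le_eq sum_pos2 intro: ccontr)
    moreover have "monom_dvd (single i 1) b \<longleftrightarrow> lookup b i \<noteq> 0" for i
      by (auto simp: monom_dvd_def lookup_single_nat)
    ultimately show ?thesis by blast
  qed
  then have "var_ideal n D = (monomial_ideal n ?E :: 'k mpoly set)"
    by (auto simp: var_ideal_def monomial_ideal_def deg_ge_def)
  also have "\<dots> = gen_ideal n (monom_poly ` ?E)"
    using D by (intro gen_ideal_monom_poly[symmetric]) auto
  also have "monom_poly ` ?E = (var ` D :: 'k mpoly set)"
    by (auto simp: var_def monom_poly_def)
  finally show ?thesis .
qed

text \<open>Prime avoidance: otherwise the product of witnesses \<open>g\<^sub>D \<notin> P\<close> would lie in \<open>P\<close>.\<close>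
lemma prime_colon_Inter:
  assumes prime: "is_prime_ideal n P" and "finite Ds"
    and Q: "\<And>D q r. D \<in> Ds \<Longrightarrow> q \<in> Q D \<Longrightarrow> q * r \<in> Q D"
    and P_eq: "P = {g \<in> polyring n. \<forall>D\<in>Ds. g * f \<in> Q D}"
  shows "\<exists>D\<in>Ds. \<forall>g\<in>polyring n. g * f \<in> Q D \<longrightarrow> g \<in> P"
proof (rule ccontr)
  assume "\<not> ?thesis"
  then have "\<forall>D\<in>Ds. \<exists>g. g \<in> polyring n \<and> g * f \<in> Q D \<and> g \<notin> P"
    by blast
  then obtain h where h: "\<forall>D\<in>Ds. h D \<in> polyring n \<and> h D * f \<in> Q D \<and> h D \<notin> P"
    by (metis bchoice)
  have "prod h Ds * f \<in> Q D" if "D \<in> Ds" for D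
  proof -
    have "prod h Ds * f = (h D * f) * prod h (Ds - {D})"
      using that \<open>finite Ds\<close> by (simp add: prod.remove algebra_simps)
    moreover have "h D * f \<in> Q D"
      using h that by blast
    ultimately show ?thesis
      using Q[OF that] by metis
  qed
  moreover have "prod h Ds \<in> polyring n"
    using h by blast
  ultimately have "prod h Ds \<in> P"
    by (simp add: P_eq)
  then show False
    using prime_ideal_prod[OF prime \<open>finite Ds\<close>] h by blast
qed

lemma var_ideal_subset_prime:
  assumes prime: "is_prime_ideal n P" and D: "D \<subseteq> {1..n}"
    and powers: "\<And>i. i \<in> D \<Longrightarrow> var i ^ s \<in> P"
  shows "var_ideal n D \<subseteq> P"
proof -
  have "is_ideal n P"
    using prime by (simp add: is_prime_ideal_def)
  have "var i \<in> P" if "i \<in> D" for i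
  proof -
    have "i \<in> {1..n}"
      using that D by blast
    then have "var i \<in> polyring n"
      by (auto simp: var_def polyring_def)
    then show ?thesis
      using prime_ideal_power[OF prime _ powers[OF that]] by blast
  qed
  then have "gen_ideal n (var ` D) \<subseteq> P"
    by (intro gen_ideal_subset \<open>is_ideal n P\<close>) blast
  then show ?thesis
    using var_ideal_eq_gen_ideal[OF D] by metis
qed

lemma Ass_symbolic_power_subset:
  assumes Ds: "finite Ds" "\<forall>D\<in>Ds. D \<subseteq> {1..n}"
    and P: "P \<in> Ass n (symbolic_power n Ds s :: 'k::field mpoly set)"
  shows "P \<in> var_ideal n ` Ds"
proof -
  obtain f where f: "f \<in> polyring n" and prime: "is_prime_ideal n P"
    and P_eq: "P = {g \<in> polyring n. g * f \<in> symbolic_power n Ds s}"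
    using P by (auto simp: Ass_def)
  have "P = {g \<in> polyring n. \<forall>D\<in>Ds. g * f \<in> deg_ge D s}"
    using P_eq f by (auto simp: symbolic_power_def)
  then have "\<exists>D\<in>Ds. \<forall>g\<in>polyring n. g * f \<in> deg_ge D s \<longrightarrow> g \<in> P"
    by (intro prime_colon_Inter[OF prime Ds(1)]) (simp_all add: deg_ge_mult_right)
  then obtain D where D: "D \<in> Ds" and D_P: "\<forall>g\<in>polyring n. g * f \<in> deg_ge D s \<longrightarrow> g \<in> P"
    by blast
  have "f \<notin> deg_ge D s"
  proof
    assume "f \<in> deg_ge D s"
    then have "1 \<in> P"
      using D_P polyring_1 by (metis mult_1)
    then show False
      using ideal_eq_polyring_if_one prime by (auto simp: is_prime_ideal_def)
  qed
  have "var_ideal n D \<subseteq> P"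
  proof (rule var_ideal_subset_prime[OF prime])
    show "D \<subseteq> {1..n}"
      using D Ds(2) by blast
    then have "finite D"
      by (rule finite_subset) simp
    fix i assume "i \<in> D"
    with \<open>D \<subseteq> {1..n}\<close> have "var i \<in> polyring n"
      by (auto simp: var_def polyring_def)
    then have "var i ^ s \<in> polyring n"
      by blast
    moreover have "(var i :: 'k mpoly) ^ s \<in> deg_ge D s"
      using \<open>i \<in> D\<close> \<open>finite D\<close> by (simp add: var_power monom_poly_def deg_ge_def partial_degree_single)
    ultimately show "var i ^ s \<in> P"
      using D_P deg_ge_mult_right by blast
  qed
  moreover have "P \<subseteq> var_ideal n D"
  proof
    fix g assume "g \<in> P"
    then have "g \<in> polyring n" "g * f \<in> deg_ge D s"
      using D by (auto simp: P_eq symbolic_power_def)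
    then show "g \<in> var_ideal n D"
      using deg_ge_primary[OF _ \<open>f \<notin> deg_ge D s\<close>] by (auto simp: var_ideal_def)
  qed
  ultimately show ?thesis
    using D by blast
qed

text \<open>The witness is \<open>x\<^sub>i\<^sup>s\<^sup>-\<^sup>1 \<Prod>\<^sub>j\<^sub>\<notin>\<^sub>D x\<^sub>j\<^sup>s\<close> for some \<open>i \<in> D\<close>: every other \<open>D'\<close> meets the complement of \<open>D\<close>.\<close>
lemma exists_monom_symbolic_witness:
  assumes Ds: "\<forall>D\<in>Ds. D \<subseteq> {1..n} \<and> D \<noteq> {}" "\<forall>D\<in>Ds. \<forall>D'\<in>Ds. D' \<subseteq> D \<longrightarrow> D' = D"
    and D: "D \<in> Ds"
  obtains \<phi> where "keys \<phi> \<subseteq> {1..n}" "partial_degree D \<phi> = s - 1"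
    "\<And>D'. D' \<in> Ds \<Longrightarrow> D' \<noteq> D \<Longrightarrow> s \<le> partial_degree D' \<phi>"
proof -
  obtain i where i: "i \<in> D"
    using D Ds(1) by blast
  have D_sub: "D \<subseteq> {1..n}"
    using D Ds(1) by blast
  then have "finite D"
    by (rule finite_subset) simp
  define \<phi> where "\<phi> = single i (s - 1) + (\<Sum>j\<in>{1..n} - D. single j s)"
  have lookup_\<phi>: "lookup \<phi> j = (if j = i then s - 1 else 0) + (if j \<in> {1..n} - D then s else 0)" for j
    by (simp add: \<phi>_def lookup_add lookup_sum lookup_single_nat)
  have "keys \<phi> \<subseteq> {1..n}"
  proof
    fix j assume "j \<in> keys \<phi>"
    then have "lookup \<phi> j \<noteq> 0"
      by (simp add: in_keys_iff)
    then show "j \<in> {1..n}"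
      using i D_sub unfolding lookup_\<phi> by (auto split: if_splits)
  qed
  moreover have "partial_degree D \<phi> = (\<Sum>j\<in>D. if j = i then s - 1 else 0)"
    unfolding partial_degree_def by (rule sum.cong) (auto simp: lookup_\<phi>)
  then have "partial_degree D \<phi> = s - 1"
    using i \<open>finite D\<close> by simp
  moreover have "s \<le> partial_degree D' \<phi>" if D': "D' \<in> Ds" "D' \<noteq> D" for D'
  proof -
    have "\<not> D' \<subseteq> D"
      using Ds(2) D D' by metis
    then obtain j where j: "j \<in> D'" "j \<notin> D"
      by blast
    have "D' \<subseteq> {1..n}"
      using D' Ds(1) by blast
    then have "j \<in> {1..n}" "finite D'"
      using j finite_subset by auto
    then have "lookup \<phi> j \<le> partial_degree D' \<phi>"
      unfolding partial_degree_def using j by (intro member_le_sum) auto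
    then show ?thesis
      using j \<open>j \<in> {1..n}\<close> by (simp add: lookup_\<phi>)
  qed
  ultimately show ?thesis
    by (rule that)
qed

lemma var_ideal_in_Ass_symbolic_power:
  assumes Ds: "\<forall>D\<in>Ds. D \<subseteq> {1..n} \<and> D \<noteq> {}" "\<forall>D\<in>Ds. \<forall>D'\<in>Ds. D' \<subseteq> D \<longrightarrow> D' = D"
    and s: "1 \<le> s" and D: "D \<in> Ds"
  shows "var_ideal n D \<in> Ass n (symbolic_power n Ds s :: 'k::field mpoly set)"
proof -
  obtain \<phi> where \<phi>: "keys \<phi> \<subseteq> {1..n}" "partial_degree D \<phi> = s - 1"
    "\<And>D'. D' \<in> Ds \<Longrightarrow> D' \<noteq> D \<Longrightarrow> s \<le> partial_degree D' \<phi>"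
    using exists_monom_symbolic_witness[OF Ds D] by blast
  define f where "f = (monom_poly \<phi> :: 'k mpoly)"
  have f: "f \<in> polyring n"
    using \<phi>(1) by (simp add: f_def polyring_def)
  have f_D: "f \<in> deg_ge D (s - 1)" "f \<notin> deg_ge D s"
    using \<phi>(2) s by (auto simp: f_def deg_ge_def)
  have "var_ideal n D = {g \<in> polyring n. g * f \<in> symbolic_power n Ds s}"
  proof (intro equalityI subsetI)
    fix g :: "'k mpoly"
    assume "g \<in> var_ideal n D"
    then have g: "g \<in> polyring n" "g \<in> deg_ge D 1"
      by (auto simp: var_ideal_def)
    have "g * f \<in> deg_ge D' s" if "D' \<in> Ds" for D'
    proof (cases "D' = D")
      case True
      then show ?thesis
        using deg_ge_mult[OF g(2) f_D(1)] s by simp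
    next
      case False
      then show ?thesis
        using \<phi>(3)[OF that] by (intro deg_ge_mult_left) (simp add: f_def deg_ge_def)
    qed
    then show "g \<in> {g \<in> polyring n. g * f \<in> symbolic_power n Ds s}"
      using g f by (auto simp: symbolic_power_def)
  next
    fix g :: "'k mpoly"
    assume "g \<in> {g \<in> polyring n. g * f \<in> symbolic_power n Ds s}"
    then have "g \<in> polyring n" "g * f \<in> deg_ge D s"
      using D by (auto simp: symbolic_power_def)
    then show "g \<in> var_ideal n D"
      using deg_ge_primary[OF _ f_D(2)] by (auto simp: var_ideal_def)
  qed
  then show ?thesis
    using f var_ideal_is_prime unfolding Ass_def by blast
qed

theorem Ass_symbolic_power:
  assumes "finite Ds" "\<forall>D\<in>Ds. D \<subseteq> {1..n} \<and> D \<noteq> {}"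
    and "\<forall>D\<in>Ds. \<forall>D'\<in>Ds. D' \<subseteq> D \<longrightarrow> D' = D" and "1 \<le> s"
  shows "Ass n (symbolic_power n Ds s :: 'k::field mpoly set) = var_ideal n ` Ds"
  using Ass_symbolic_power_subset[of Ds n] var_ideal_in_Ass_symbolic_power[of Ds n s] assms by blast

section \<open>A criterion for squarefree monomial ideals\<close>

definition sqfree_monom :: "nat set \<Rightarrow> monom" where
  "sqfree_monom G = (\<Sum>i\<in>G. single i 1)"

text \<open>Equivalently, some product of \<open>s\<close> monomials \<open>x\<^sub>G\<close>, \<open>G \<in> Gs\<close>, divides \<open>x\<^sup>a\<close>.\<close>
definition has_packing :: "nat set set \<Rightarrow> nat \<Rightarrow> (nat \<Rightarrow> nat) \<Rightarrow> bool" where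
  "has_packing Gs s a \<longleftrightarrow>
     (\<exists>G. (\<forall>k<s. G k \<in> Gs) \<and> (\<forall>j. (\<Sum>k<s. if j \<in> G k then 1 else 0) \<le> a j))"

lemma lookup_sqfree_monom: "finite G \<Longrightarrow> lookup (sqfree_monom G) j = (if j \<in> G then 1 else 0)"
  by (simp add: sqfree_monom_def lookup_sum lookup_single_nat)

lemma keys_sqfree_monom: "keys (sqfree_monom G) \<subseteq> G"
  using keys_monom_sum[of "\<lambda>i. single i (1::nat)" G] by (auto simp: sqfree_monom_def)

lemma xmon_eq_monom_poly: "(xmon G :: 'k::field mpoly) = monom_poly (sqfree_monom G)"
proof -
  have "(xmon G :: 'k mpoly) = (\<Prod>i\<in>G. monom_poly (single i 1))"
    by (simp add: xmon_def var_def monom_poly_def)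
  then show ?thesis
    by (simp add: prod_monom_poly sqfree_monom_def)
qed

lemma partial_degree_sqfree_monom:
  assumes "finite D" "finite G" "D \<inter> G \<noteq> {}"
  shows "1 \<le> partial_degree D (sqfree_monom G)"
proof -
  obtain j where j: "j \<in> D" "j \<in> G"
    using assms(3) by blast
  then have "lookup (sqfree_monom G) j \<le> partial_degree D (sqfree_monom G)"
    unfolding partial_degree_def using assms(1) by (intro member_le_sum) auto
  then show ?thesis
    using j assms(2) by (simp add: lookup_sqfree_monom)
qed

lemma partial_degree_monom_sums:
  assumes "\<forall>a\<in>M. 1 \<le> partial_degree D a" and "g \<in> monom_sums M s"
  shows "s \<le> partial_degree D g"
proof -
  obtain a where a: "g = (\<Sum>i<s. a i)" "\<forall>i<s. a i \<in> M"
    using assms(2) by (auto simp: monom_sums_def)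
  have "s = (\<Sum>i<s. (1::nat))"
    by simp
  also have "\<dots> \<le> (\<Sum>i<s. partial_degree D (a i))"
    using a(2) assms(1) by (intro sum_mono) auto
  also have "\<dots> = partial_degree D g"
    by (simp add: a(1) partial_degree_sum)
  finally show ?thesis .
qed

lemma monom_sums_dvd_iff_has_packing:
  assumes "\<forall>G\<in>Gs. finite G"
  shows "(\<exists>g\<in>monom_sums (sqfree_monom ` Gs) s. monom_dvd g b) \<longleftrightarrow> has_packing Gs s (lookup b)"
proof
  assume "\<exists>g\<in>monom_sums (sqfree_monom ` Gs) s. monom_dvd g b"
  then obtain a where a: "\<forall>k<s. a k \<in> sqfree_monom ` Gs" "monom_dvd (\<Sum>k<s. a k) b"
    by (auto simp: monom_sums_def)
  then have "\<forall>k\<in>{..<s}. \<exists>G\<in>Gs. a k = sqfree_monom G"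
    by blast
  then obtain G where G: "\<forall>k<s. G k \<in> Gs \<and> a k = sqfree_monom (G k)"
    by (metis bchoice lessThan_iff)
  have "(\<Sum>k<s. if j \<in> G k then 1 else 0) = lookup (\<Sum>k<s. a k) j" for j
    unfolding lookup_sum using G assms by (intro sum.cong) (auto simp: lookup_sqfree_monom)
  then show "has_packing Gs s (lookup b)"
    using a(2) G unfolding has_packing_def monom_dvd_def by (intro exI[of _ G]) auto
next
  assume "has_packing Gs s (lookup b)"
  then obtain G where G: "\<forall>k<s. G k \<in> Gs" "\<forall>j. (\<Sum>k<s. if j \<in> G k then 1 else 0) \<le> lookup b j"
    by (auto simp: has_packing_def)
  have "lookup (\<Sum>k<s. sqfree_monom (G k)) j = (\<Sum>k<s. if j \<in> G k then 1 else 0)" for j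
    unfolding lookup_sum using G(1) assms by (intro sum.cong) (auto simp: lookup_sqfree_monom)
  then have "monom_dvd (\<Sum>k<s. sqfree_monom (G k)) b"
    using G(2) by (simp add: monom_dvd_def)
  moreover have "(\<Sum>k<s. sqfree_monom (G k)) \<in> monom_sums (sqfree_monom ` Gs) s"
    using G(1) unfolding monom_sums_def by blast
  ultimately show "\<exists>g\<in>monom_sums (sqfree_monom ` Gs) s. monom_dvd g b"
    by blast
qed

lemma monomial_ideal_monom_sums_eq_symbolic_power:
  assumes Gs: "\<forall>G\<in>Gs. finite G" and Ds: "\<forall>D\<in>Ds. finite D"
    and meets: "\<forall>G\<in>Gs. \<forall>D\<in>Ds. D \<inter> G \<noteq> {}"
    and packing: "\<And>a. \<forall>D\<in>Ds. s \<le> (\<Sum>j\<in>D. a j) \<Longrightarrow> has_packing Gs s a"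
  shows "monomial_ideal n (monom_sums (sqfree_monom ` Gs) s) = (symbolic_power n Ds s :: 'k::field mpoly set)"
proof -
  have "(\<exists>g\<in>monom_sums (sqfree_monom ` Gs) s. monom_dvd g b) \<longleftrightarrow> (\<forall>D\<in>Ds. s \<le> partial_degree D b)" for b
  proof
    assume "\<exists>g\<in>monom_sums (sqfree_monom ` Gs) s. monom_dvd g b"
    then obtain g where g: "g \<in> monom_sums (sqfree_monom ` Gs) s" "monom_dvd g b"
      by blast
    have "s \<le> partial_degree D b" if "D \<in> Ds" for D
    proof -
      have "\<forall>a\<in>sqfree_monom ` Gs. 1 \<le> partial_degree D a"
      proof
        fix a assume "a \<in> sqfree_monom ` Gs"
        then obtain G where "G \<in> Gs" "a = sqfree_monom G"
          by blast
        have "1 \<le> partial_degree D (sqfree_monom G)"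
          using Gs Ds meets \<open>G \<in> Gs\<close> \<open>D \<in> Ds\<close> by (intro partial_degree_sqfree_monom) auto
        then show "1 \<le> partial_degree D a"
          using \<open>a = sqfree_monom G\<close> by simp
      qed
      then have "s \<le> partial_degree D g"
        using g(1) by (rule partial_degree_monom_sums)
      also have "\<dots> \<le> partial_degree D b"
        using Ds that g(2) by (intro partial_degree_mono) auto
      finally show ?thesis .
    qed
    then show "\<forall>D\<in>Ds. s \<le> partial_degree D b"
      by blast
  next
    assume "\<forall>D\<in>Ds. s \<le> partial_degree D b"
    then have "has_packing Gs s (lookup b)"
      by (intro packing) (simp add: partial_degree_def)
    then show "\<exists>g\<in>monom_sums (sqfree_monom ` Gs) s. monom_dvd g b"
      using monom_sums_dvd_iff_has_packing[OF Gs] by blast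
  qed
  then show ?thesis
    unfolding monomial_ideal_def symbolic_power_def deg_ge_def by blast
qed

text \<open>Together, \<open>meets\<close> and \<open>packing\<close> make the powers of the ideal equal to the symbolic powers
  attached to \<open>Ds\<close> (the max-flow min-cut property of the clutter \<open>Gs\<close>).\<close>
theorem normally_torsion_free_sqfree:
  assumes Gs: "\<forall>G\<in>Gs. G \<subseteq> {1..n}"
    and Ds: "finite Ds" "\<forall>D\<in>Ds. D \<subseteq> {1..n} \<and> D \<noteq> {}" "\<forall>D\<in>Ds. \<forall>D'\<in>Ds. D' \<subseteq> D \<longrightarrow> D' = D"
    and meets: "\<forall>G\<in>Gs. \<forall>D\<in>Ds. D \<inter> G \<noteq> {}"
    and packing: "\<And>s a. \<forall>D\<in>Ds. s \<le> (\<Sum>j\<in>D. a j) \<Longrightarrow> has_packing Gs s a"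
  shows "normally_torsion_free n (gen_ideal n (xmon ` Gs) :: 'k::field mpoly set)"
proof -
  let ?M = "sqfree_monom ` Gs"
  have fin: "\<forall>G\<in>Gs. finite G" "\<forall>D\<in>Ds. finite D"
    using Gs Ds(2) by (meson finite_atLeastAtMost finite_subset)+
  have M: "\<forall>a\<in>?M. keys a \<subseteq> {1..n}"
    using Gs keys_sqfree_monom by blast
  have I: "gen_ideal n (xmon ` Gs) = (monomial_ideal n ?M :: 'k mpoly set)"
    using gen_ideal_monom_poly[OF M] by (simp add: xmon_eq_monom_poly image_image)
  have powers: "ideal_pow n (gen_ideal n (xmon ` Gs)) s = (symbolic_power n Ds s :: 'k mpoly set)" for s
    unfolding I ideal_pow_monomial_ideal[OF M]
    using fin meets packing by (rule monomial_ideal_monom_sums_eq_symbolic_power)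
  have "gen_ideal n (xmon ` Gs) = (monomial_ideal n (monom_sums ?M 1) :: 'k mpoly set)"
    by (simp only: I monom_sums_1)
  also have "\<dots> = symbolic_power n Ds 1"
    by (rule monomial_ideal_monom_sums_eq_symbolic_power[OF fin meets packing])
  finally have I1: "gen_ideal n (xmon ` Gs) = (symbolic_power n Ds 1 :: 'k mpoly set)" .
  have "Ass n (symbolic_power n Ds s :: 'k mpoly set) = var_ideal n ` Ds" if "1 \<le> s" for s
    using Ass_symbolic_power[OF Ds that] .
  then show ?thesis
    unfolding normally_torsion_free_def powers I1[symmetric] by (simp add: I1)
qed

section \<open>Windows of the line graph and their covers\<close>

definition window :: "nat \<Rightarrow> nat \<Rightarrow> nat set" where
  "window t i = {i..i + t - 1}"

definition window_cover :: "nat \<Rightarrow> nat \<Rightarrow> nat set \<Rightarrow> bool" where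
  "window_cover n t D \<longleftrightarrow> D \<subseteq> {1..n} \<and> (\<forall>i. 1 \<le> i \<and> i \<le> n - t + 1 \<longrightarrow> D \<inter> window t i \<noteq> {})"

lemma path_sets_eq: "path_sets n t = window t ` {1..n - t + 1}"
  by (auto simp: path_sets_def window_def)

lemma window_subset: "1 \<le> i \<Longrightarrow> i \<le> n - t + 1 \<Longrightarrow> t \<le> n \<Longrightarrow> window t i \<subseteq> {1..n}"
  by (auto simp: window_def)

lemma window_cover_iff: "window_cover n t C \<longleftrightarrow> C \<subseteq> {1..n} \<and> (\<forall>G\<in>path_sets n t. C \<inter> G \<noteq> {})"
  by (auto simp: window_cover_def path_sets_eq)

lemma window_subset_imp_eq:
  assumes "1 \<le> t" "window t i' \<subseteq> window t i"
  shows "i' = i"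
proof -
  have "i' \<in> window t i" "i' + t - 1 \<in> window t i"
    using assms by (auto simp: window_def)
  then show ?thesis
    using assms(1) by (auto simp: window_def)
qed

lemma finite_window_cover: "window_cover n t D \<Longrightarrow> finite D"
  unfolding window_cover_def using finite_subset by blast

lemma window_cover_exchange:
  assumes D: "window_cover n t D" and Z: "Z \<subseteq> {1..n}" and p: "1 \<le> p" "p \<le> n - t + 1"
    and Z_before: "\<And>q. 1 \<le> q \<Longrightarrow> q < p \<Longrightarrow> Z \<inter> window t q \<noteq> {}"
  shows "window_cover n t ((D - window t p) \<union> {Max (D \<inter> window t p)} \<union> Z)"
    (is "window_cover n t ?D'")
proof -
  let ?m = "Max (D \<inter> window t p)"
  have "finite D" "D \<inter> window t p \<noteq> {}"
    using D p finite_window_cover by (auto simp: window_cover_def)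
  then have m: "?m \<in> D \<inter> window t p" "\<And>d. d \<in> D \<inter> window t p \<Longrightarrow> d \<le> ?m"
    by (metis IntE Max_in finite_Int, simp)
  show ?thesis
    unfolding window_cover_def
  proof (intro conjI allI impI)
    show "?D' \<subseteq> {1..n}"
      using D m Z by (auto simp: window_cover_def)
  next
    fix q assume q: "1 \<le> q \<and> q \<le> n - t + 1"
    show "?D' \<inter> window t q \<noteq> {}"
    proof (cases "q < p")
      case True
      then show ?thesis
        using Z_before q by blast
    next
      case False
      obtain d where d: "d \<in> D" "d \<in> window t q"
        using D q by (auto simp: window_cover_def)
      show ?thesis
      proof (cases "d \<in> window t p")
        case True
        have "d \<le> ?m"
          using m(2) d(1) True by blast
        moreover have "?m \<le> p + t - 1" "q \<le> d"
          using m(1) d(2) by (simp_all add: window_def)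
        ultimately have "?m \<in> window t q"
          using \<open>\<not> q < p\<close> by (simp add: window_def)
        then show ?thesis
          by blast
      qed (use d in blast)
    qed
  qed
qed

text \<open>Lower the weight by one on the first window \<open>J\<close> avoiding the zeros \<open>Z\<close> of \<open>a\<close>. A cover \<open>D\<close> is
  compared with the cover of \<open>window_cover_exchange\<close>, which meets \<open>J\<close> once and has no larger weight
  outside \<open>J\<close>.\<close>
lemma window_cover_weight_decrease:
  fixes a :: "nat \<Rightarrow> nat"
  assumes t: "1 \<le> t" "t \<le> n"
    and H: "\<forall>D. window_cover n t D \<longrightarrow> Suc s \<le> (\<Sum>j\<in>D. a j)"
  obtains p where "1 \<le> p" "p \<le> n - t + 1" "\<forall>j\<in>window t p. 1 \<le> a j"
    "\<forall>D. window_cover n t D \<longrightarrow> s \<le> (\<Sum>j\<in>D. a j - (if j \<in> window t p then 1 else 0))"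
proof -
  define Z where "Z = {j\<in>{1..n}. a j = 0}"
  have "(\<Sum>j\<in>Z. a j) = 0"
    by (simp add: Z_def)
  then have "\<not> window_cover n t Z"
    using H by fastforce
  then have ex: "\<exists>i. 1 \<le> i \<and> i \<le> n - t + 1 \<and> Z \<inter> window t i = {}"
    by (auto simp: window_cover_def Z_def)
  define p where "p = (LEAST i. 1 \<le> i \<and> i \<le> n - t + 1 \<and> Z \<inter> window t i = {})"
  have p: "1 \<le> p" "p \<le> n - t + 1" "Z \<inter> window t p = {}"
    using LeastI_ex[OF ex] unfolding p_def by blast+
  have Z_before: "Z \<inter> window t q \<noteq> {}" if "1 \<le> q" "q < p" for q
    using not_less_Least[of q "\<lambda>i. 1 \<le> i \<and> i \<le> n - t + 1 \<and> Z \<inter> window t i = {}"] that p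
    unfolding p_def[symmetric] by auto
  define J where "J = window t p"
  have pos: "1 \<le> a j" if "j \<in> J" for j
  proof -
    have "j \<in> {1..n}" "j \<notin> Z"
      using that p t window_subset[of p n t] by (auto simp: J_def)
    then show ?thesis
      by (simp add: Z_def)
  qed
  define a' where "a' j = a j - (if j \<in> J then 1 else 0)" for j
  have "s \<le> (\<Sum>j\<in>D. a' j)" if D: "window_cover n t D" for D
  proof -
    define m where "m = Max (D \<inter> J)"
    define D' where "D' = (D - J) \<union> {m} \<union> Z"
    have "window_cover n t D'"
      unfolding D'_def m_def J_def using D p Z_before by (intro window_cover_exchange) (auto simp: Z_def)
    then have "finite D'" "Suc s \<le> (\<Sum>j\<in>D'. a j)"
      using H finite_window_cover by blast+
    have "finite D" "m \<in> D \<inter> J"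
      using D p finite_window_cover Max_in[of "D \<inter> J"] by (auto simp: window_cover_def m_def J_def)
    have "(\<Sum>j\<in>D'. a j) = (\<Sum>j\<in>D' - Z. a j) + (\<Sum>j\<in>D' \<inter> Z. a j)"
      using \<open>finite D'\<close> by (metis add.commute sum.Int_Diff)
    also have "(\<Sum>j\<in>D' \<inter> Z. a j) = 0"
      by (simp add: Z_def)
    also have "(\<Sum>j\<in>D' - Z. a j) \<le> (\<Sum>j\<in>insert m (D - J). a j)"
      using \<open>finite D\<close> by (intro sum_mono2) (auto simp: D'_def)
    also have "\<dots> = a' m + 1 + (\<Sum>j\<in>D - J. a' j)"
      using \<open>finite D\<close> \<open>m \<in> D \<inter> J\<close> pos[of m] by (simp add: a'_def)
    also have "\<dots> = (\<Sum>j\<in>insert m (D - J). a' j) + 1"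
      using \<open>finite D\<close> \<open>m \<in> D \<inter> J\<close> by simp
    also have "(\<Sum>j\<in>insert m (D - J). a' j) \<le> (\<Sum>j\<in>D. a' j)"
      using \<open>finite D\<close> \<open>m \<in> D \<inter> J\<close> by (intro sum_mono2) auto
    finally show "s \<le> (\<Sum>j\<in>D. a' j)"
      using \<open>Suc s \<le> (\<Sum>j\<in>D'. a j)\<close> by simp
  qed
  then show ?thesis
    using that p pos by (auto simp: a'_def J_def)
qed

lemma has_packing_windows:
  fixes a :: "nat \<Rightarrow> nat"
  assumes t: "1 \<le> t" "t \<le> n"
    and H: "\<forall>D. window_cover n t D \<longrightarrow> s \<le> (\<Sum>j\<in>D. a j)"
  shows "has_packing (path_sets n t) s a"
  using H
proof (induction s arbitrary: a)
  case 0
  then show ?case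
    by (simp add: has_packing_def)
next
  case (Suc s)
  obtain p where p: "1 \<le> p" "p \<le> n - t + 1" "\<forall>j\<in>window t p. 1 \<le> a j"
    and H': "\<forall>D. window_cover n t D \<longrightarrow> s \<le> (\<Sum>j\<in>D. a j - (if j \<in> window t p then 1 else 0))"
    using window_cover_weight_decrease[OF t Suc.prems] by blast
  obtain G where G: "\<forall>k<s. G k \<in> path_sets n t"
    "\<forall>j. (\<Sum>k<s. if j \<in> G k then 1 else 0) \<le> a j - (if j \<in> window t p then 1 else 0)"
    using Suc.IH[OF H'] by (auto simp: has_packing_def)
  have "\<forall>k<Suc s. (G(s := window t p)) k \<in> path_sets n t"
    using G(1) p by (auto simp: less_Suc_eq path_sets_eq)
  moreover have "(\<Sum>k<Suc s. if j \<in> (G(s := window t p)) k then 1 else 0) \<le> a j" for j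
    using G(2)[rule_format, of j] p(3) by (cases "j \<in> window t p") auto
  ultimately show ?case
    unfolding has_packing_def by blast
qed

lemma exists_mod_in_interval:
  fixes L s r :: nat
  assumes "r < s"
  shows "\<exists>u. L < u \<and> u \<le> L + s \<and> u mod s = r"
proof -
  define u where "u = r + s * ((L + s - r) div s)"
  have "s * ((L + s - r) div s) \<le> L + s - r"
    by (simp add: div_times_less_eq_dividend mult.commute)
  moreover have "L + s - r < s * ((L + s - r) div s) + s"
    using assms by (metis add.commute div_mult_mod_eq mod_less_divisor add_less_cancel_left
        mult.commute zero_less_iff_neq_zero not_less0)
  ultimately have "L < u" "u \<le> L + s"
    using assms unfolding u_def by linarith+
  moreover have "u mod s = r"
    using assms unfolding u_def by simp
  ultimately show ?thesis
    by blast
qed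

definition prefix_sum :: "(nat \<Rightarrow> nat) \<Rightarrow> nat \<Rightarrow> nat" where
  "prefix_sum a j = (\<Sum>i\<in>{1..j}. a i)"

text \<open>A window of weight at least \<open>s\<close> spans at least \<open>s\<close> consecutive numbers between prefix sums,
  hence meets every residue class modulo \<open>s\<close>: so each \<open>residue_cover n s a r\<close> is a window cover, and \<open>j\<close>
  lies in at most \<open>a j\<close> of them.\<close>
definition residue_cover :: "nat \<Rightarrow> nat \<Rightarrow> (nat \<Rightarrow> nat) \<Rightarrow> nat \<Rightarrow> nat set" where
  "residue_cover n s a r =
     {j\<in>{1..n}. \<exists>u. prefix_sum a (j - 1) < u \<and> u \<le> prefix_sum a j \<and> u mod s = r}"

lemma prefix_sum_Suc: "prefix_sum a (Suc j) = prefix_sum a j + a (Suc j)"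
  by (simp add: prefix_sum_def)

lemma prefix_sum_mono: "j \<le> k \<Longrightarrow> prefix_sum a j \<le> prefix_sum a k"
  unfolding prefix_sum_def by (intro sum_mono2) auto

lemma prefix_sum_window:
  assumes "1 \<le> i" "1 \<le> t"
  shows "prefix_sum a (i - 1) + (\<Sum>j\<in>window t i. a j) = prefix_sum a (i + t - 1)"
proof -
  have "{1..i + t - 1} = {1..i - 1} \<union> window t i" "{1..i - 1} \<inter> window t i = {}"
    using assms by (auto simp: window_def)
  then show ?thesis
    unfolding prefix_sum_def by (simp add: sum.union_disjoint window_def)
qed

lemma window_cover_residue_cover:
  assumes t: "1 \<le> t" "t \<le> n" and r: "r < s"
    and H: "\<forall>i. 1 \<le> i \<and> i \<le> n - t + 1 \<longrightarrow> s \<le> (\<Sum>j\<in>window t i. a j)"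
  shows "window_cover n t (residue_cover n s a r)"
  unfolding window_cover_def
proof (intro conjI allI impI)
  show "residue_cover n s a r \<subseteq> {1..n}"
    by (auto simp: residue_cover_def)
next
  fix i assume i: "1 \<le> i \<and> i \<le> n - t + 1"
  let ?A = "prefix_sum a"
  obtain u where u: "?A (i - 1) < u" "u \<le> ?A (i - 1) + s" "u mod s = r"
    using exists_mod_in_interval[OF r] by blast
  have "u \<le> ?A (i + t - 1)"
    using u(2) H i prefix_sum_window[of i t a] t by fastforce
  define j where "j = (LEAST j. u \<le> ?A j)"
  have j: "u \<le> ?A j" "j \<le> i + t - 1"
    using LeastI[of "\<lambda>j. u \<le> ?A j"] Least_le[of "\<lambda>j. u \<le> ?A j"] \<open>u \<le> ?A (i + t - 1)\<close>
    unfolding j_def by blast+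
  have "i \<le> j"
  proof (rule ccontr)
    assume "\<not> i \<le> j"
    then have "?A j \<le> ?A (i - 1)"
      by (intro prefix_sum_mono) simp
    then show False
      using j(1) u(1) by simp
  qed
  have "?A (j - 1) < u"
    using not_less_Least[of "j - 1" "\<lambda>j. u \<le> ?A j"] \<open>i \<le> j\<close> i unfolding j_def[symmetric] by simp
  then have "j \<in> residue_cover n s a r \<inter> window t i"
    using j \<open>i \<le> j\<close> i t u(3) unfolding residue_cover_def window_def by auto
  then show "residue_cover n s a r \<inter> window t i \<noteq> {}"
    by blast
qed

lemma count_residue_covers: "(\<Sum>r<s. if j \<in> residue_cover n s a r then 1 else 0) \<le> a j"
proof -
  have "(\<Sum>r<s. if j \<in> residue_cover n s a r then 1 else 0) = card ({..<s} \<inter> {r. j \<in> residue_cover n s a r})"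
    by (simp add: sum.If_cases)
  also have "\<dots> \<le> a j"
  proof (cases "j \<in> {1..n}")
    case True
    have "{..<s} \<inter> {r. j \<in> residue_cover n s a r}
        \<subseteq> (\<lambda>u. u mod s) ` {prefix_sum a (j - 1)<..prefix_sum a j}"
      by (auto simp: residue_cover_def)
    then have "card ({..<s} \<inter> {r. j \<in> residue_cover n s a r})
        \<le> card {prefix_sum a (j - 1)<..prefix_sum a j}"
      by (meson card_image_le card_mono finite_greaterThanAtMost order_trans finite_imageI)
    also have "\<dots> = a j"
      using True prefix_sum_Suc[of a "j - 1"] by simp
    finally show ?thesis .
  qed (auto simp: residue_cover_def)
  finally show ?thesis .
qed

lemma has_packing_window_covers:
  assumes t: "1 \<le> t" "t \<le> n"
    and H: "\<forall>i. 1 \<le> i \<and> i \<le> n - t + 1 \<longrightarrow> s \<le> (\<Sum>j\<in>window t i. a j)"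
  shows "has_packing (Collect (window_cover n t)) s a"
  unfolding has_packing_def
  using window_cover_residue_cover[OF t _ H] count_residue_covers
  by (intro exI[of _ "residue_cover n s a"]) auto

section \<open>Path ideals of the line graph and their Alexander duals\<close>

lemma exists_minimal_subset:
  "finite D \<Longrightarrow> P D \<Longrightarrow> \<exists>D'\<subseteq>D. P D' \<and> (\<forall>D''. D'' \<subset> D' \<longrightarrow> \<not> P D'')"
proof (induction D rule: finite_psubset_induct)
  case (psubset D)
  show ?case
  proof (cases "\<forall>D''. D'' \<subset> D \<longrightarrow> \<not> P D''")
    case False
    then obtain D'' where "D'' \<subset> D" "P D''"
      by blast
    then show ?thesis
      using psubset.IH by (meson psubset_imp_subset subset_trans)
  qed (use psubset.prems in blast)
qed

lemma normally_torsion_free_path_ideal: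
  assumes t: "1 \<le> t" "t \<le> n"
  shows "normally_torsion_free n (path_ideal n t :: 'k::field mpoly set)"
proof -
  define Ds where "Ds = {D. window_cover n t D \<and> (\<forall>D'. D' \<subset> D \<longrightarrow> \<not> window_cover n t D')}"
  have "path_ideal n t = gen_ideal n (xmon ` path_sets n t :: 'k mpoly set)"
    unfolding path_ideal_def path_sets_def by (rule arg_cong[where f = "gen_ideal n"]) blast
  also have "normally_torsion_free n \<dots>"
  proof (rule normally_torsion_free_sqfree)
    show "\<forall>G\<in>path_sets n t. G \<subseteq> {1..n}"
      using t window_subset by (auto simp: path_sets_eq)
    show "finite Ds"
      by (rule finite_subset[of _ "Pow {1..n}"]) (auto simp: Ds_def window_cover_def)
    show "\<forall>D\<in>Ds. D \<subseteq> {1..n} \<and> D \<noteq> {}"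
    proof
      fix D assume "D \<in> Ds"
      then have "window_cover n t D"
        by (simp add: Ds_def)
      then have "D \<subseteq> {1..n}" "D \<inter> window t 1 \<noteq> {}"
        unfolding window_cover_def by (metis le_add2 order_refl)+
      then show "D \<subseteq> {1..n} \<and> D \<noteq> {}"
        by blast
    qed
    show "\<forall>D\<in>Ds. \<forall>D'\<in>Ds. D' \<subseteq> D \<longrightarrow> D' = D"
      unfolding Ds_def by blast
    show "\<forall>G\<in>path_sets n t. \<forall>D\<in>Ds. D \<inter> G \<noteq> {}"
      by (auto simp: Ds_def window_cover_def path_sets_eq)
  next
    fix s :: nat and a :: "nat \<Rightarrow> nat"
    assume weights: "\<forall>D\<in>Ds. s \<le> (\<Sum>j\<in>D. a j)"
    have "s \<le> (\<Sum>j\<in>D. a j)" if D: "window_cover n t D" for D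
    proof -
      obtain D' where "D' \<subseteq> D" "D' \<in> Ds"
        using exists_minimal_subset[OF finite_window_cover[OF D], of "window_cover n t"] D
        by (auto simp: Ds_def)
      then show ?thesis
        using weights finite_window_cover[OF D] sum_mono2[of D D' a] by fastforce
    qed
    then show "has_packing (path_sets n t) s a"
      using has_packing_windows[OF t] by blast
  qed
  finally show ?thesis .
qed

lemma normally_torsion_free_alexander_dual_path:
  assumes t: "1 \<le> t" "t \<le> n"
  shows "normally_torsion_free n (alexander_dual n (path_sets n t) :: 'k::field mpoly set)"
proof -
  have "alexander_dual n (path_sets n t) = gen_ideal n (xmon ` Collect (window_cover n t) :: 'k mpoly set)"
    unfolding alexander_dual_def window_cover_iff by (rule arg_cong[where f = "gen_ideal n"]) blast
  also have "normally_torsion_free n \<dots>"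
  proof (rule normally_torsion_free_sqfree)
    show "\<forall>G\<in>Collect (window_cover n t). G \<subseteq> {1..n}"
      by (simp add: window_cover_def)
    show "finite (path_sets n t)"
      by (simp add: path_sets_eq)
    show "\<forall>D\<in>path_sets n t. D \<subseteq> {1..n} \<and> D \<noteq> {}"
      using t by (auto simp: path_sets_eq window_def)
    show "\<forall>D\<in>path_sets n t. \<forall>D'\<in>path_sets n t. D' \<subseteq> D \<longrightarrow> D' = D"
      using t window_subset_imp_eq by (auto simp: path_sets_eq)
    show "\<forall>G\<in>Collect (window_cover n t). \<forall>D\<in>path_sets n t. D \<inter> G \<noteq> {}"
      by (auto simp: window_cover_def path_sets_eq)
  next
    fix s :: nat and a :: "nat \<Rightarrow> nat"
    assume "\<forall>D\<in>path_sets n t. s \<le> (\<Sum>j\<in>D. a j)"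
    then show "has_packing (Collect (window_cover n t)) s a"
      by (intro has_packing_window_covers[OF t]) (auto simp: path_sets_eq)
  qed
  finally show ?thesis .
qed

theorem theorem2p3:
  fixes n t :: nat
  assumes "1 \<le> t" and "t \<le> n"
  shows "normally_torsion_free n (path_ideal n t :: 'k::field mpoly set)
       \<and> normally_torsion_free n (alexander_dual n (path_sets n t) :: 'k::field mpoly set)"
  using assms by (intro conjI normally_torsion_free_path_ideal normally_torsion_free_alexander_dual_path)

end
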